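(* (Cutfree completeness.) For all finite multisets of formulas $\Gamma,\Delta$: if $\Gamma\models\bigvee\Delta$, then $\vdash_{\mathsf{GT}^-}\Gamma\Rightarrow\Delta$.
   Context: Fix a countably infinite set $\mathsf{Prop}$ of propositional variables. Classical formulas are generated by $\alpha ::= p \mid \bot \mid \neg\alpha \mid \alpha\wedge\alpha \mid \alpha\vee\alpha$ with $p\in\mathsf{Prop}$. Formulas are generated by $\phi ::= \alpha \mid \phi\wedge\phi \mid \phi\vee\phi \mid \phi\mathbin{\backslash\!\!/}\phi$ where $\alpha$ is classical ($\vee$: split disjunction, $\mathbin{\backslash\!\!/}$: inquisitive disjunction). A team with domain $X\subseteq\mathsf{Prop}$ is a set $t\subseteq 2^X$ of valuations. For a team $t$ whose domain contains the variables of the formula: $t\models p$ iff $v(p)=1$ for all $v\in t$; $t\models\bot$ iff $t=\emptyset$; $t\models\neg\alpha$ iff $\{v\}\not\models\alpha$ for all $v\in t$; $t\models\phi\wedge\psi$ iff both hold; $t\models\phi\vee\psi$ iff there are $s,u\subseteq t$ with $t=s\cup u$, $s\models\phi$, $u\models\psi$; $t\models\phi\mathbin{\backslash\!\!/}\psi$ iff $t\models\phi$ or $t\models\psi$. $\Gamma\models\phi$ means every team satisfying all members of the multiset $\Gamma$ satisfies $\phi$. $\bigvee\emptyset:=\bot$. A sequent is $\Gamma\Rightarrow\Delta$ with $\Gamma,\Delta$ finite multisets; "$\Gamma,\Delta$" is multiset union. Deep-inference notation: for a formula $\chi$ with a designated occurrence of a subformula not in the scope of any negation, $\chi\{\eta\}$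 denotes the result of replacing that occurrence by $\eta$. The cut-free calculus $\mathsf{GT}^-$ ($\alpha$ ranges over classical formulas, $\Lambda$ over multisets of classical formulas): axioms $\Gamma,p\Rightarrow p,\Delta$ and $\Gamma,\bot\Rightarrow\Delta$; (L$\neg$) from $\Gamma\Rightarrow\alpha,\Delta$ infer $\Gamma,\neg\alpha\Rightarrow\Delta$; (R$\neg$) from $\Gamma,\alpha\Rightarrow\Delta$ infer $\Gamma\Rightarrow\neg\alpha,\Delta$; (L$\wedge$) from $\Gamma,\phi,\psi\Rightarrow\Delta$ infer $\Gamma,\phi\wedge\psi\Rightarrow\Delta$; (R$\wedge$) from $\Gamma\Rightarrow\phi,\Lambda$ and $\Gamma\Rightarrow\psi,\Lambda$ infer $\Gamma\Rightarrow\phi\wedge\psi,\Lambda,\Delta$; (L$\vee$) from $\Gamma,\phi\Rightarrow\Lambda$ and $\Gamma,\psi\Rightarrow\Lambda$ infer $\Gamma,\phi\vee\psi\Rightarrow\Lambda,\Delta$; (R$\vee$) from $\Gamma\Rightarrow\phi,\psi,\Delta$ infer $\Gamma\Rightarrow\phi\vee\psi,\Delta$; (L$\mathbin{\backslash\!\!/}$) from $\Gamma,\chi\{\phi_L\}\Rightarrow\Delta$ and $\Gamma,\chi\{\phi_R\}\Rightarrow\Delta$ infer $\Gamma,\chi\{\phi_L\mathbin{\backslash\!\!/}\phi_R\}\Rightarrow\Delta$; (R$\mathbin{\backslash\!\!/}$) from $\Gamma\Rightarrow\chi\{\phi_i\},\Delta$ ($i\in\{L,R\}$) infer $\Gamma\Rightarrow\chi\{\phi_L\mathbin{\backslash\!\!/}\phi_R\},\Delta$.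 $\vdash_{\mathsf{GT}^-}$ denotes derivability in $\mathsf{GT}^-$. *)

theory Defs
  imports Main "HOL-Library.Multiset"
begin

text \<open>Propositional variables: the countably infinite set nat.
  IDisj is the inquisitive disjunction, Disj the split (tensor) disjunction.\<close>

datatype fm = Atom nat | Bot | Neg fm | Conj fm fm | Disj fm fm | IDisj fm fm

fun classical :: "fm \<Rightarrow> bool" where
  "classical (Atom p) = True"
| "classical Bot = True"
| "classical (Neg a) = classical a"
| "classical (Conj a b) = (classical a \<and> classical b)"
| "classical (Disj a b) = (classical a \<and> classical b)"
| "classical (IDisj a b) = False"

fun wff :: "fm \<Rightarrow> bool" where
  "wff (Atom p) = True"
| "wff Bot = True"
| "wff (Neg a) = classical a"
| "wff (Conj a b) = (wff a \<and> wff b)"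
| "wff (Disj a b) = (wff a \<and> wff b)"
| "wff (IDisj a b) = (wff a \<and> wff b)"

fun vars :: "fm \<Rightarrow> nat set" where
  "vars (Atom p) = {p}"
| "vars Bot = {}"
| "vars (Neg a) = vars a"
| "vars (Conj a b) = vars a \<union> vars b"
| "vars (Disj a b) = vars a \<union> vars b"
| "vars (IDisj a b) = vars a \<union> vars b"

text \<open>A valuation on domain X is represented as a function nat \<Rightarrow> bool that is
  False outside X; a team with domain X is a set of such functions.\<close>
definition team :: "nat set \<Rightarrow> (nat \<Rightarrow> bool) set \<Rightarrow> bool" where
  "team X t \<longleftrightarrow> (\<forall>v\<in>t. \<forall>p. p \<notin> X \<longrightarrow> v p = False)"

fun sat :: "(nat \<Rightarrow> bool) set \<Rightarrow> fm \<Rightarrow> bool" where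
  "sat t (Atom p) = (\<forall>v\<in>t. v p)"
| "sat t Bot = (t = {})"
| "sat t (Neg a) = (\<forall>v\<in>t. \<not> sat {v} a)"
| "sat t (Conj a b) = (sat t a \<and> sat t b)"
| "sat t (Disj a b) = (\<exists>s u. s \<subseteq> t \<and> u \<subseteq> t \<and> t = s \<union> u \<and> sat s a \<and> sat u b)"
| "sat t (IDisj a b) = (sat t a \<or> sat t b)"

definition entails :: "fm multiset \<Rightarrow> fm \<Rightarrow> bool" where
  "entails \<Gamma> \<phi> \<longleftrightarrow> (\<forall>X t. (\<Union>\<psi>\<in>set_mset \<Gamma>. vars \<psi>) \<union> vars \<phi> \<subseteq> X \<longrightarrow> team X t \<longrightarrow>
       (\<forall>\<psi>\<in>#\<Gamma>. sat t \<psi>) \<longrightarrow> sat t \<phi>)"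

fun bigvee_list :: "fm list \<Rightarrow> fm" where
  "bigvee_list [] = Bot"
| "bigvee_list [a] = a"
| "bigvee_list (a # b # xs) = Disj a (bigvee_list (b # xs))"

text \<open>Split disjunction of a finite multiset (via some enumeration; the choice of order
  is semantically irrelevant). The empty disjunction is Bot.\<close>
definition bigvee :: "fm multiset \<Rightarrow> fm" where
  "bigvee \<Delta> = bigvee_list (SOME xs. mset xs = \<Delta>)"

datatype ctx = Hole
  | CL ctx fm | CR fm ctx
  | DL ctx fm | DR fm ctx
  | IL ctx fm | IR fm ctx

fun fill :: "ctx \<Rightarrow> fm \<Rightarrow> fm" where
  "fill Hole e = e"
| "fill (CL c b) e = Conj (fill c e) b"
| "fill (CR a c) e = Conj a (fill c e)"
| "fill (DL c b) e = Disj (fill c e) b"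
| "fill (DR a c) e = Disj a (fill c e)"
| "fill (IL c b) e = IDisj (fill c e) b"
| "fill (IR a c) e = IDisj a (fill c e)"

inductive GTm :: "fm multiset \<Rightarrow> fm multiset \<Rightarrow> bool" where
  Ax: "GTm (add_mset (Atom p) \<Gamma>) (add_mset (Atom p) \<Delta>)"
| AxBot: "GTm (add_mset Bot \<Gamma>) \<Delta>"
| LNeg: "classical a \<Longrightarrow> GTm \<Gamma> (add_mset a \<Delta>) \<Longrightarrow> GTm (add_mset (Neg a) \<Gamma>) \<Delta>"
| RNeg: "classical a \<Longrightarrow> GTm (add_mset a \<Gamma>) \<Delta> \<Longrightarrow> GTm \<Gamma> (add_mset (Neg a) \<Delta>)"
| LConj: "GTm (add_mset \<phi> (add_mset \<psi> \<Gamma>)) \<Delta> \<Longrightarrow> GTm (add_mset (Conj \<phi> \<psi>) \<Gamma>) \<Delta>"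
| RConj: "\<forall>a\<in>#\<Lambda>. classical a \<Longrightarrow> GTm \<Gamma> (add_mset \<phi> \<Lambda>) \<Longrightarrow> GTm \<Gamma> (add_mset \<psi> \<Lambda>) \<Longrightarrow>
          GTm \<Gamma> (add_mset (Conj \<phi> \<psi>) (\<Lambda> + \<Delta>))"
| LDisj: "\<forall>a\<in>#\<Lambda>. classical a \<Longrightarrow> GTm (add_mset \<phi> \<Gamma>) \<Lambda> \<Longrightarrow> GTm (add_mset \<psi> \<Gamma>) \<Lambda> \<Longrightarrow>
          GTm (add_mset (Disj \<phi> \<psi>) \<Gamma>) (\<Lambda> + \<Delta>)"
| RDisj: "GTm \<Gamma> (add_mset \<phi> (add_mset \<psi> \<Delta>)) \<Longrightarrow> GTm \<Gamma> (add_mset (Disj \<phi> \<psi>) \<Delta>)"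
| LIDisj: "GTm (add_mset (fill c \<phi>L) \<Gamma>) \<Delta> \<Longrightarrow> GTm (add_mset (fill c \<phi>R) \<Gamma>) \<Delta> \<Longrightarrow>
           GTm (add_mset (fill c (IDisj \<phi>L \<phi>R)) \<Gamma>) \<Delta>"
| RIDisjL: "GTm \<Gamma> (add_mset (fill c \<phi>L) \<Delta>) \<Longrightarrow> GTm \<Gamma> (add_mset (fill c (IDisj \<phi>L \<phi>R)) \<Delta>)"
| RIDisjR: "GTm \<Gamma> (add_mset (fill c \<phi>R) \<Delta>) \<Longrightarrow> GTm \<Gamma> (add_mset (fill c (IDisj \<phi>L \<phi>R)) \<Delta>)"

end

theory Submission
  imports Defs
begin

text \<open>Classical formulas are flat: a team satisfies one iff each of its valuations does, and
  every formula is downward closed. A left-hand inquisitive disjunction inside a context is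
  handled by proving both instances. For a right-hand one, once the premises are classical
  they are satisfied by a largest team \<open>T\<close>, namely all valuations making them true. Splitting
  \<open>T\<close> along the split disjunction of the succedent shows that one fixed disjunct \<open>L\<close> or \<open>R\<close>
  works for \<open>T\<close>, hence by downward closure for every team, so the corresponding instance is
  again valid. When everything is classical, validity on singleton teams is ordinary
  classical validity, and the classical rules are complete by the usual decomposition.\<close>

fun holds :: "(nat \<Rightarrow> bool) \<Rightarrow> fm \<Rightarrow> bool" where
  "holds v (Atom p) = v p"
| "holds v Bot = False"
| "holds v (Neg a) = (\<not> holds v a)"
| "holds v (Conj a b) = (holds v a \<and> holds v b)"
| "holds v (Disj a b) = (holds v a \<or> holds v b)"
| "holds v (IDisj a b) = (holds v a \<or> holds v b)"

lemma sat_classical_iff: "classical a \<Longrightarrow> sat t a \<longleftrightarrow> (\<forall>v\<in>t. holds v a)"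
proof (induction a arbitrary: t)
  case (Disj a b)
  show ?case
  proof
    assume "\<forall>v\<in>t. holds v (Disj a b)"
    then have "t = {v\<in>t. holds v a} \<union> {v\<in>t. holds v b}"
      and "sat {v\<in>t. holds v a} a" "sat {v\<in>t. holds v b} b"
      using Disj by auto
    then show "sat t (Disj a b)" by (simp only: sat.simps) blast
  qed (use Disj in auto)
qed auto

lemma sat_singleton_classical: "classical a \<Longrightarrow> sat {v} a \<longleftrightarrow> holds v a"
  by (simp add: sat_classical_iff)

lemma sat_downward_closed: "sat t a \<Longrightarrow> s \<subseteq> t \<Longrightarrow> sat s a"
proof (induction a arbitrary: s t)
  case (Disj a b)
  then obtain t1 t2 where t: "t = t1 \<union> t2" "sat t1 a" "sat t2 b" by auto
  have "sat (s \<inter> t1) a" by (rule Disj.IH(1)[OF t(2)]) blast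
  moreover have "sat (s \<inter> t2) b" by (rule Disj.IH(2)[OF t(3)]) blast
  moreover have "s = (s \<inter> t1) \<union> (s \<inter> t2)" using Disj.prems(2) t(1) by blast
  ultimately show ?case by (simp only: sat.simps) blast
qed auto

lemma sat_fill_mono:
  "(\<And>t. sat t a \<Longrightarrow> sat t b) \<Longrightarrow> sat t (fill c a) \<Longrightarrow> sat t (fill c b)"
  by (induction c arbitrary: t) fastforce+

lemma sat_fill_IDisj: "sat t (fill c (IDisj L R)) \<Longrightarrow> sat t (fill c L) \<or> sat t (fill c R)"
proof (induction c arbitrary: t)
  case (DL c b)
  then obtain s u where "t = s \<union> u" "sat s (fill c (IDisj L R))" "sat u b" by auto
  with DL.IH[of s] show ?case by (simp only: fill.simps sat.simps) blast
next
  case (DR a c)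
  then obtain s u where "t = s \<union> u" "sat s a" "sat u (fill c (IDisj L R))" by auto
  with DR.IH[of u] show ?case by (simp only: fill.simps sat.simps) blast
qed auto

lemma size_fill_IDisj_less:
  "X \<in> {L, R} \<Longrightarrow> size (fill c X) < size (fill c (IDisj L R))"
  by (induction c) auto

lemma wff_fill_IDisj_instance: "wff (fill c (IDisj L R)) \<Longrightarrow> X \<in> {L, R} \<Longrightarrow> wff (fill c X)"
  by (induction c) auto

lemma wff_nonclassical_fill_IDisj:
  "wff a \<Longrightarrow> \<not> classical a \<Longrightarrow> \<exists>c L R. a = fill c (IDisj L R)"
proof (induction a)
  case (Conj a b)
  show ?case
  proof (cases "classical a")
    case True
    with Conj obtain c L R where "b = fill c (IDisj L R)" by auto
    then have "Conj a b = fill (CR a c) (IDisj L R)" by simp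
    then show ?thesis by blast
  next
    case False
    with Conj obtain c L R where "a = fill c (IDisj L R)" by auto
    then have "Conj a b = fill (CL c b) (IDisj L R)" by simp
    then show ?thesis by blast
  qed
next
  case (Disj a b)
  show ?case
  proof (cases "classical a")
    case True
    with Disj obtain c L R where "b = fill c (IDisj L R)" by auto
    then have "Disj a b = fill (DR a c) (IDisj L R)" by simp
    then show ?thesis by blast
  next
    case False
    with Disj obtain c L R where "a = fill c (IDisj L R)" by auto
    then have "Disj a b = fill (DL c b) (IDisj L R)" by simp
    then show ?thesis by blast
  qed
next
  case (IDisj a b)
  have "IDisj a b = fill Hole (IDisj a b)" by simp
  then show ?case by blast
qed auto

lemma sat_bigvee_list_Cons:
  "sat t (bigvee_list (a # xs)) \<longleftrightarrow> (\<exists>s u. t = s \<union> u \<and> sat s a \<and> sat u (bigvee_list xs))"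
proof (cases xs)
  case (Cons b ys)
  then show ?thesis by (simp only: bigvee_list.simps sat.simps) blast
qed simp

lemma sat_bigvee_list_swap:
  "sat t (bigvee_list (a # b # xs)) \<longleftrightarrow> sat t (bigvee_list (b # a # xs))"
proof -
  have "sat t (bigvee_list (b # a # xs))" if "sat t (bigvee_list (a # b # xs))" for a b
  proof -
    from that obtain s1 s2 u
      where "t = s1 \<union> (s2 \<union> u)" "sat s1 a" "sat s2 b" "sat u (bigvee_list xs)"
      by (auto simp only: sat_bigvee_list_Cons)
    then have "t = s2 \<union> (s1 \<union> u)" "sat s2 b" "sat (s1 \<union> u) (bigvee_list (a # xs))"
      by (auto simp only: sat_bigvee_list_Cons)
    then show ?thesis by (auto simp only: sat_bigvee_list_Cons)
  qed
  then show ?thesis by blast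
qed

lemma sat_bigvee_list_remove1:
  "x \<in> set xs \<Longrightarrow> sat t (bigvee_list xs) \<longleftrightarrow> sat t (bigvee_list (x # remove1 x xs))"
proof (induction xs arbitrary: t)
  case (Cons y ys)
  show ?case
  proof (cases "x = y")
    case False
    with Cons have "x \<in> set ys" by simp
    have "sat t (bigvee_list (y # ys)) \<longleftrightarrow> sat t (bigvee_list (y # x # remove1 x ys))"
      using Cons.IH[OF \<open>x \<in> set ys\<close>] by (simp only: sat_bigvee_list_Cons)
    also have "\<dots> \<longleftrightarrow> sat t (bigvee_list (x # y # remove1 x ys))"
      by (rule sat_bigvee_list_swap)
    finally show ?thesis using False by simp
  qed simp
qed simp

lemma sat_bigvee_list_perm:
  "mset xs = mset ys \<Longrightarrow> sat t (bigvee_list xs) \<longleftrightarrow> sat t (bigvee_list ys)"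
proof (induction xs arbitrary: ys t)
  case (Cons x xs)
  have "x \<in> set ys" using Cons.prems by (metis list.set_intros(1) set_mset_mset)
  have "mset xs = mset (remove1 x ys)" by (simp add: mset_remove1 flip: Cons.prems)
  with Cons.IH have "sat t (bigvee_list (x # xs)) \<longleftrightarrow> sat t (bigvee_list (x # remove1 x ys))"
    by (simp only: sat_bigvee_list_Cons)
  also have "\<dots> \<longleftrightarrow> sat t (bigvee_list ys)"
    using sat_bigvee_list_remove1 [OF \<open>x \<in> set ys\<close>] by simp
  finally show ?case .
qed simp

lemma sat_bigvee_mset: "sat t (bigvee (mset xs)) \<longleftrightarrow> sat t (bigvee_list xs)"
  unfolding bigvee_def
  by (rule sat_bigvee_list_perm, rule someI [of "\<lambda>ys. mset ys = mset xs"]) (rule refl)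

lemma sat_bigvee_empty: "sat t (bigvee {#}) \<longleftrightarrow> t = {}"
  using sat_bigvee_mset [of t "[]"] by simp

lemma sat_bigvee_add_mset:
  "sat t (bigvee (add_mset a D)) \<longleftrightarrow> (\<exists>s u. t = s \<union> u \<and> sat s a \<and> sat u (bigvee D))"
proof -
  obtain xs where "D = mset xs" by (metis ex_mset)
  then show ?thesis using sat_bigvee_mset [of t "a # xs"]
    by (simp add: sat_bigvee_mset sat_bigvee_list_Cons)
qed

lemma sat_singleton_bigvee: "sat {v} (bigvee D) \<Longrightarrow> \<exists>d\<in>#D. sat {v} d"
proof (induction D)
  case (add a D)
  then obtain s u where "{v} = s \<union> u" "sat s a" "sat u (bigvee D)"
    by (auto simp: sat_bigvee_add_mset)
  then have "s = {v} \<and> sat {v} a \<or> u = {v} \<and> sat {v} (bigvee D)"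
    by (metis Un_empty_left Un_empty_right subset_singleton_iff sup.cobounded1 sup.cobounded2)
  with add.IH show ?case by auto
qed (simp add: sat_bigvee_empty)

definition team_valid :: "fm multiset \<Rightarrow> fm multiset \<Rightarrow> bool" where
  "team_valid \<Gamma> \<Delta> \<longleftrightarrow> (\<forall>t. (\<forall>\<gamma>\<in>#\<Gamma>. sat t \<gamma>) \<longrightarrow> sat t (bigvee \<Delta>))"

text \<open>Over the domain \<open>UNIV\<close> every set of valuations is a team.\<close>
lemma team_valid_if_entails: "entails \<Gamma> (bigvee \<Delta>) \<Longrightarrow> team_valid \<Gamma> \<Delta>"
  unfolding entails_def team_valid_def team_def by blast

lemma team_valid_fill_mono:
  assumes "\<And>t. sat t a \<Longrightarrow> sat t b" and "team_valid (add_mset (fill c b) \<Gamma>) \<Delta>"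
  shows "team_valid (add_mset (fill c a) \<Gamma>) \<Delta>"
  using assms sat_fill_mono [of a b] unfolding team_valid_def by auto

lemma team_valid_fill_IDisj:
  assumes \<Gamma>: "\<forall>\<gamma>\<in>#\<Gamma>. classical \<gamma>"
    and valid: "team_valid \<Gamma> (add_mset (fill c (IDisj L R)) \<Delta>)"
  shows "team_valid \<Gamma> (add_mset (fill c L) \<Delta>) \<or> team_valid \<Gamma> (add_mset (fill c R) \<Delta>)"
proof -
  define T where "T = {v. \<forall>\<gamma>\<in>#\<Gamma>. holds v \<gamma>}"
  have largest: "t \<subseteq> T \<longleftrightarrow> (\<forall>\<gamma>\<in>#\<Gamma>. sat t \<gamma>)" for t
    using \<Gamma> by (auto simp: T_def sat_classical_iff)
  then have "sat T (bigvee (add_mset (fill c (IDisj L R)) \<Delta>))"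
    using valid unfolding team_valid_def by blast
  then obtain s u where T: "T = s \<union> u" "sat s (fill c (IDisj L R))" "sat u (bigvee \<Delta>)"
    by (auto simp: sat_bigvee_add_mset)
  have "team_valid \<Gamma> (add_mset (fill c X) \<Delta>)" if "sat s (fill c X)" for X
    unfolding team_valid_def sat_bigvee_add_mset
  proof (intro allI impI)
    fix t assume "\<forall>\<gamma>\<in>#\<Gamma>. sat t \<gamma>"
    then have "t = (t \<inter> s) \<union> (t \<inter> u)" using largest T(1) by blast
    moreover have "sat (t \<inter> s) (fill c X)" using that by (rule sat_downward_closed) blast
    moreover have "sat (t \<inter> u) (bigvee \<Delta>)" using T(3) by (rule sat_downward_closed) blast
    ultimately show "\<exists>s' u'. t = s' \<union> u' \<and> sat s' (fill c X) \<and> sat u' (bigvee \<Delta>)" by blast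
  qed
  with sat_fill_IDisj [OF T(2)] show ?thesis by blast
qed

lemma team_valid_classical:
  assumes "\<forall>\<gamma>\<in>#\<Gamma>. classical \<gamma>" "\<forall>\<delta>\<in>#\<Delta>. classical \<delta>" and "team_valid \<Gamma> \<Delta>"
    and "\<forall>\<gamma>\<in>#\<Gamma>. holds v \<gamma>"
  shows "\<exists>\<delta>\<in>#\<Delta>. holds v \<delta>"
  using assms sat_singleton_bigvee [of v \<Delta>]
  by (auto simp: team_valid_def sat_singleton_classical)

fun atomic :: "fm \<Rightarrow> bool" where
  "atomic (Atom p) = True"
| "atomic Bot = True"
| "atomic _ = False"

lemma GTm_atomic_complete:
  assumes "\<forall>a\<in>#\<Gamma> + \<Delta>. atomic a"
    and "\<forall>v. (\<forall>\<gamma>\<in>#\<Gamma>. holds v \<gamma>) \<longrightarrow> (\<exists>\<delta>\<in>#\<Delta>. holds v \<delta>)"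
  shows "GTm \<Gamma> \<Delta>"
proof (cases "Bot \<in># \<Gamma>")
  case True
  then show ?thesis by (metis AxBot multi_member_split)
next
  case False
  let ?v = "\<lambda>p. Atom p \<in># \<Gamma>"
  have "holds ?v \<gamma>" if "\<gamma> \<in># \<Gamma>" for \<gamma>
  proof -
    from that assms(1) have "atomic \<gamma>" by simp
    with that False show ?thesis by (cases \<gamma>) auto
  qed
  with assms(2) obtain \<delta> where "\<delta> \<in># \<Delta>" "holds ?v \<delta>" by blast
  moreover from \<open>\<delta> \<in># \<Delta>\<close> assms(1) have "atomic \<delta>" by simp
  ultimately obtain p where "Atom p \<in># \<Gamma>" "Atom p \<in># \<Delta>" by (cases \<delta>) auto
  then show ?thesis by (metis Ax multi_member_split)
qed

lemma GTm_classical_complete: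
  assumes "\<forall>a\<in>#\<Gamma> + \<Delta>. classical a"
    and "\<forall>v. (\<forall>\<gamma>\<in>#\<Gamma>. holds v \<gamma>) \<longrightarrow> (\<exists>\<delta>\<in>#\<Delta>. holds v \<delta>)"
  shows "GTm \<Gamma> \<Delta>"
  using assms
proof (induction "\<Sum>a\<in>#\<Gamma> + \<Delta>. size a" arbitrary: \<Gamma> \<Delta> rule: less_induct)
  case less
  consider (left) a \<Gamma>' where "\<Gamma> = add_mset a \<Gamma>'" "\<not> atomic a"
    | (right) a \<Delta>' where "\<Delta> = add_mset a \<Delta>'" "\<not> atomic a"
    | (atomic) "\<forall>a\<in>#\<Gamma> + \<Delta>. atomic a"
    by (metis multi_member_split union_iff)
  then show ?case
  proof cases
    case (left a \<Gamma>')
    with less.prems have "classical a" by simp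
    with left less show ?thesis
    proof (cases a)
      case (Neg b)
      with left less have "GTm \<Gamma>' (add_mset b \<Delta>)" by (intro less.hyps) auto
      with left Neg \<open>classical a\<close> show ?thesis by (simp add: LNeg)
    next
      case (Conj b c)
      with left less have "GTm (add_mset b (add_mset c \<Gamma>')) \<Delta>" by (intro less.hyps) auto
      with left Conj show ?thesis by (simp add: LConj)
    next
      case (Disj b c)
      with left less have "GTm (add_mset b \<Gamma>') \<Delta>" "GTm (add_mset c \<Gamma>') \<Delta>"
        by (intro less.hyps; auto)+
      with left Disj less.prems show ?thesis by (simp add: LDisj [where \<Delta> = "{#}", simplified])
    qed auto
  next
    case (right a \<Delta>')
    with less.prems have "classical a" by simp
    with right less show ?thesis
    proof (cases a)
      case (Neg b)
      with right less have "GTm (add_mset b \<Gamma>) \<Delta>'" by (intro less.hyps) auto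
      with right Neg \<open>classical a\<close> show ?thesis by (simp add: RNeg)
    next
      case (Conj b c)
      with right less have "GTm \<Gamma> (add_mset b \<Delta>')" "GTm \<Gamma> (add_mset c \<Delta>')"
        by (intro less.hyps; auto)+
      with right Conj less.prems show ?thesis by (simp add: RConj [where \<Delta> = "{#}", simplified])
    next
      case (Disj b c)
      with right less have "GTm \<Gamma> (add_mset b (add_mset c \<Delta>'))" by (intro less.hyps) auto
      with right Disj show ?thesis by (simp add: RDisj)
    qed auto
  next
    case atomic
    from atomic less.prems(2) show ?thesis by (rule GTm_atomic_complete)
  qed
qed

lemma GTm_complete:
  assumes "\<forall>a\<in>#\<Gamma> + \<Delta>. wff a" and "team_valid \<Gamma> \<Delta>"
  shows "GTm \<Gamma> \<Delta>"
  using assms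
proof (induction "\<Sum>a\<in>#\<Gamma> + \<Delta>. size a" arbitrary: \<Gamma> \<Delta> rule: less_induct)
  case less
  consider (left) a \<Gamma>' where "\<Gamma> = add_mset a \<Gamma>'" "\<not> classical a"
    | (right) a \<Delta>' where "\<Delta> = add_mset a \<Delta>'" "\<not> classical a" "\<forall>\<gamma>\<in>#\<Gamma>. classical \<gamma>"
    | (classical) "\<forall>a\<in>#\<Gamma> + \<Delta>. classical a"
    by (metis multi_member_split union_iff)
  then show ?case
  proof cases
    case (left a \<Gamma>')
    from left less.prems(1) have "wff a" by simp
    with left obtain c L R where a: "a = fill c (IDisj L R)"
      using wff_nonclassical_fill_IDisj by blast
    have "GTm (add_mset (fill c X) \<Gamma>') \<Delta>" if "X \<in> {L, R}" for X
    proof (rule less.hyps)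
      show "(\<Sum>a\<in>#add_mset (fill c X) \<Gamma>' + \<Delta>. size a) < (\<Sum>a\<in>#\<Gamma> + \<Delta>. size a)"
        using left a size_fill_IDisj_less [OF that] by simp
      show "\<forall>a\<in>#add_mset (fill c X) \<Gamma>' + \<Delta>. wff a"
        using less.prems(1) left a wff_fill_IDisj_instance [OF _ that] by auto
      have "sat t X \<Longrightarrow> sat t (IDisj L R)" for t using that by auto
      from this less.prems(2) [unfolded left a]
      show "team_valid (add_mset (fill c X) \<Gamma>') \<Delta>" by (rule team_valid_fill_mono)
    qed
    with left a show ?thesis by (simp add: LIDisj)
  next
    case (right a \<Delta>')
    from right less.prems(1) have "wff a" by simp
    with right obtain c L R where a: "a = fill c (IDisj L R)"
      using wff_nonclassical_fill_IDisj by blast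
    have "GTm \<Gamma> (add_mset (fill c X) \<Delta>')"
      if "X \<in> {L, R}" "team_valid \<Gamma> (add_mset (fill c X) \<Delta>')" for X
    proof (rule less.hyps)
      show "(\<Sum>a\<in>#\<Gamma> + add_mset (fill c X) \<Delta>'. size a) < (\<Sum>a\<in>#\<Gamma> + \<Delta>. size a)"
        using right a size_fill_IDisj_less [OF that(1)] by simp
      show "\<forall>a\<in>#\<Gamma> + add_mset (fill c X) \<Delta>'. wff a"
        using less.prems(1) right a wff_fill_IDisj_instance [OF _ that(1)] by auto
    qed (fact that(2))
    moreover have
      "team_valid \<Gamma> (add_mset (fill c L) \<Delta>') \<or> team_valid \<Gamma> (add_mset (fill c R) \<Delta>')"
      using team_valid_fill_IDisj right less.prems(2) a by blast
    ultimately show ?thesis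
      using right a by (auto intro: RIDisjL RIDisjR)
  next
    case classical
    then show ?thesis
      using team_valid_classical [OF _ _ less.prems(2)] by (auto intro!: GTm_classical_complete)
  qed
qed

theorem theorem6p9:
  fixes \<Gamma> \<Delta> :: "fm multiset"
  assumes "\<forall>\<phi>\<in>#\<Gamma> + \<Delta>. wff \<phi>"
    and "entails \<Gamma> (bigvee \<Delta>)"
  shows "GTm \<Gamma> \<Delta>"
  using assms(1) team_valid_if_entails [OF assms(2)] by (rule GTm_complete)

end
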